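(* Fix integers $m\in\mathbb{N}$ and $j$ with $m\le j\le 2m$. Let $\mathcal{A}_j$ be the set of all tuples $(\alpha_1,\dots,\alpha_j)\in\{1,\dots,2m\}^j$ with $\alpha_1+\cdots+\alpha_j=2m$ such that exactly $2m-j$ of the $\alpha_\nu$ equal $2$ and the remaining $2(j-m)$ of the $\alpha_\nu$ equal $1$; let $\mathcal{A}_j^c$ be the set of tuples $(\alpha_1,\dots,\alpha_j)\in\{1,\dots,2m\}^j$ with $\alpha_1+\cdots+\alpha_j=2m$ that are not in $\mathcal{A}_j$. For such a tuple define $$S_n(\alpha_1,\dots,\alpha_j)=\frac{1}{n^m}\sum_{\substack{(i_1,\dots,i_j)\in\{1,\dots,n\}^j\\ i_1,\dots,i_j\text{ pairwise distinct}}}\cos\Big(\frac{2\pi i_1}{n}\Big)^{\alpha_1}\cdots\cos\Big(\frac{2\pi i_j}{n}\Big)^{\alpha_j}.$$ Then, as $n\to\infty$, for $(\alpha_1,\dots,\alpha_j)\in\mathcal{A}_j$, $$S_n(\alpha_1,\dots,\alpha_j)=(-1)^{j-m}\frac{(2(j-m))!}{2^j\,(j-m)!}\Big(1+\mathcal{O}\Big(\frac1n\Big)\Big),$$ and for $(\alpha_1,\dots,\alpha_j)\in\mathcal{A}_j^c$, $$S_n(\alpha_1,\dots,\alpha_j)=\mathcal{O}\Big(\frac1n\Big).$$ *)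

theory Defs
  imports Complex_Main "HOL-Library.Landau_Symbols"
begin

text \<open>Tuples (alpha_1,...,alpha_j) are represented as lists of length j (list index k
  corresponds to alpha_(k+1)).\<close>

definition adm_tuples :: "nat \<Rightarrow> nat \<Rightarrow> nat list set" where
  "adm_tuples m j = {al. length al = j \<and> set al \<subseteq> {1..2*m} \<and> sum_list al = 2*m}"

definition tuples_A :: "nat \<Rightarrow> nat \<Rightarrow> nat list set" where
  "tuples_A m j = {al \<in> adm_tuples m j.
      length (filter (\<lambda>a. a = 2) al) = 2*m - j \<and>
      length (filter (\<lambda>a. a = 1) al) = 2*(j - m)}"

definition tuples_Ac :: "nat \<Rightarrow> nat \<Rightarrow> nat list set" where
  "tuples_Ac m j = adm_tuples m j - tuples_A m j"

definition S :: "nat \<Rightarrow> nat \<Rightarrow> nat list \<Rightarrow> real" where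
  "S m n al = (1 / real n ^ m) *
     (\<Sum>is \<in> {is. length is = length al \<and> set is \<subseteq> {1..n} \<and> distinct is}.
        \<Prod>k<length al. cos (2 * pi * real (is ! k) / real n) ^ (al ! k))"

end

theory Submission
  imports Defs
begin

text \<open>Write c(i) = cos (2 pi i / n). Expanding c(i) in n-th roots of unity shows that for
  a < n the power sum p(a) = sum_i c(i)^a is n (a choose a/2) / 2^a for even a and 0 for odd a;
  in particular p(2) = n/2. The sum D(alpha) over pairwise distinct indices satisfies the
  inclusion-exclusion recursion
  D(beta @ [a]) = p(a) D(beta) - sum_k D(beta with a added to its k-th entry),
  and induction on the length of alpha gives D(alpha) = L(alpha) n^(s/2) + O(n^(s/2 - 1)) with
  s the sum of the entries. Entries a >= 3 only produce lower-order terms, so L(alpha) = 0 unless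
  every entry is 1 or 2; then each 2 contributes p(2) ~ n/2 and the entries equal to 1 must
  coincide in pairs, each coincidence costing a sign, which makes L(alpha) a signed count of
  perfect matchings divided by 2^(s/2). Dividing by n^m yields both estimates.\<close>

lemma sum_cis_roots_of_unity_power:
  fixes t :: int
  assumes n: "0 < n" and t: "\<bar>t\<bar> < int n"
  shows "(\<Sum>i\<in>{1..n}. cis (2*pi*real i/real n * of_int t)) = (if t = 0 then of_nat n else 0)"
proof (cases "t = 0")
  case False
  define z where "z = cis (2*pi*of_int t/real n)"
  have z_power: "cis (2*pi*real i/real n * of_int t) = z^i" for i
    unfolding z_def DeMoivre by (simp add: mult_ac)
  have "z^n = cis (2*pi*of_int t)"
    unfolding z_def DeMoivre using n by (simp add: field_simps)
  then have zn: "z^n = 1"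
    by (simp add: mult.assoc[symmetric])
  have "z \<noteq> 1"
  proof
    assume "z = 1"
    then have "cos (2*pi*of_int t/real n) = 1"
      by (simp add: z_def complex_eq_iff)
    then obtain k :: int where "2*pi*of_int t/real n = of_int k * 2 * pi"
      using cos_one_2pi_int by blast
    then have "of_int t = real n * of_int k"
      using n by (simp add: field_simps)
    then have "t = int n * k"
      by (metis of_int_eq_iff of_int_mult of_int_of_nat_eq)
    with t False show False
      by (cases "k = 0") (auto simp: abs_mult)
  qed
  have "(\<Sum>i\<in>{1..n}. z^i) = z * (\<Sum>i<n. z^i)"
    by (simp add: sum.atLeast1_atMost_eq sum_distrib_left)
  also have "\<dots> = 0"
    using \<open>z \<noteq> 1\<close> zn by (simp add: geometric_sum)
  finally show ?thesis
    unfolding z_power using False by simp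
qed simp

definition cos_power_sum :: "nat \<Rightarrow> nat \<Rightarrow> real" where
  "cos_power_sum n a = (\<Sum>i\<in>{1..n}. cos (2*pi*real i/real n) ^ a)"

lemma cos_power_sum_eq:
  assumes "a < n"
  shows "cos_power_sum n a = (if even a then real n * real (a choose (a div 2)) / 2^a else 0)"
proof -
  let ?x = "\<lambda>i. 2*pi*real i/real n"
  have cos_cis: "complex_of_real (cos x) = (cis x + cis (-x)) / 2" for x
    by (simp add: complex_eq_iff)
  have binomial_cis: "((cis x + cis (-x)) / 2) ^ a =
      (\<Sum>k\<le>a. of_nat (a choose k) * cis (x * of_int (2*int k - int a))) / 2^a" for x
  proof -
    have "cis x ^ k * cis (-x) ^ (a-k) = cis (x * of_int (2*int k - int a))" if "k \<le> a" for k
      using that by (simp add: DeMoivre cis_mult algebra_simps of_nat_diff)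
    then show ?thesis
      by (simp add: power_divide binomial_ring mult.assoc)
  qed
  have "complex_of_real (cos_power_sum n a) =
      (\<Sum>k\<le>a. of_nat (a choose k) * (\<Sum>i\<in>{1..n}. cis (?x i * of_int (2*int k - int a)))) / 2^a"
    by (simp add: cos_power_sum_def cos_cis binomial_cis sum_divide_distrib[symmetric]
        sum_distrib_left) (rule sum.swap)
  also have "\<dots> = (\<Sum>k\<le>a. of_nat (a choose k) * (if 2*k = a then of_nat n else 0)) / 2^a"
    using assms
    by (intro arg_cong2[where f="(/)"] sum.cong refl arg_cong2[where f="(*)"]
        trans[OF sum_cis_roots_of_unity_power]) auto
  also have "\<dots> = complex_of_real (if even a then real n * real (a choose (a div 2)) / 2^a else 0)"
  proof -
    have "(2*k = a) = (even a \<and> k = a div 2)" for k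
      by auto
    then show ?thesis
      by (simp add: if_distrib cong: if_cong)
  qed
  finally show ?thesis
    using of_real_eq_iff by blast
qed

lemma cos_power_sum_odd: "odd a \<Longrightarrow> a < n \<Longrightarrow> cos_power_sum n a = 0"
  by (simp add: cos_power_sum_eq)

lemma cos_power_sum_2: "2 < n \<Longrightarrow> cos_power_sum n 2 = real n / 2"
  by (simp add: cos_power_sum_eq)

lemma cos_power_sum_bigo: "(\<lambda>n. cos_power_sum n a) \<in> O(\<lambda>n. real n)"
proof (intro bigoI[of _ 1] always_eventually allI)
  fix n
  have "\<bar>cos_power_sum n a\<bar> \<le> (\<Sum>i\<in>{1..n}. \<bar>cos (2*pi*real i/real n) ^ a\<bar>)"
    unfolding cos_power_sum_def by (rule sum_abs)
  also have "\<dots> \<le> (\<Sum>i\<in>{1..n}. 1)"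
    by (intro sum_mono) (simp add: power_abs power_le_one)
  finally show "norm (cos_power_sum n a) \<le> 1 * norm (real n)"
    by simp
qed

definition distinct_power_sum :: "('a \<Rightarrow> 'b::comm_ring_1) \<Rightarrow> 'a set \<Rightarrow> nat list \<Rightarrow> 'b" where
  "distinct_power_sum f A al =
    (\<Sum>is \<in> {is. length is = length al \<and> set is \<subseteq> A \<and> distinct is}.
      \<Prod>k<length al. f (is ! k) ^ (al ! k))"

lemma distinct_power_sum_Nil [simp]: "distinct_power_sum f A [] = 1"
proof -
  have "{is. length is = 0 \<and> set is \<subseteq> A \<and> distinct is} = {[]}"
    by auto
  then show ?thesis
    by (simp add: distinct_power_sum_def)
qed

lemma distinct_lists_length_Suc:
  "{is. length is = Suc l \<and> set is \<subseteq> A \<and> distinct is} =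
   (\<lambda>(is,x). is @ [x]) ` (SIGMA is:{is. length is = l \<and> set is \<subseteq> A \<and> distinct is}. A - set is)"
  by (auto simp: length_Suc_conv_rev image_iff)

lemma prod_power_list_update_add:
  assumes "k < length bl"
  shows "(\<Prod>i<length bl. g i ^ (bl[k := bl ! k + a] ! i)) = (\<Prod>i<length bl. g i ^ (bl ! i)) * g k ^ a"
proof -
  have "(\<Prod>i<length bl. g i ^ (bl[k := bl ! k + a] ! i)) =
      (\<Prod>i<length bl. g i ^ (bl ! i) * (if i = k then g i ^ a else 1))"
    using assms by (intro prod.cong refl) (auto simp: nth_list_update power_add)
  then show ?thesis
    using assms by (simp add: prod.distrib prod.delta)
qed

text \<open>Inclusion-exclusion on the last index: it ranges over A minus the earlier indices, and
  removing the coincidence with the k-th index merges the last exponent into the k-th.\<close>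
lemma distinct_power_sum_snoc:
  assumes fin: "finite A"
  shows "distinct_power_sum f A (bl @ [a]) =
    (\<Sum>x\<in>A. f x ^ a) * distinct_power_sum f A bl
    - (\<Sum>k<length bl. distinct_power_sum f A (bl[k := bl ! k + a]))"
proof -
  define l where "l = length bl"
  define T where "T = {is. length is = l \<and> set is \<subseteq> A \<and> distinct is}"
  define P where "P is = (\<Prod>k<l. f (is ! k) ^ (bl ! k))" for "is"
  have finT: "finite T"
    unfolding T_def by (rule finite_subset[OF _ finite_lists_length_eq[OF fin, of l]]) auto
  have inj: "inj_on (\<lambda>(is,x). is @ [x]) (SIGMA is:T. A - set is)"
    by (auto simp: inj_on_def)
  have "distinct_power_sum f A (bl @ [a]) =
      (\<Sum>y\<in>(\<lambda>(is,x). is @ [x]) ` (SIGMA is:T. A - set is). \<Prod>k<Suc l. f (y ! k) ^ ((bl @ [a]) ! k))"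
    unfolding distinct_power_sum_def T_def l_def by (simp add: distinct_lists_length_Suc)
  also have "\<dots> = (\<Sum>(is,x)\<in>(SIGMA is:T. A - set is). \<Prod>k<Suc l. f ((is @ [x]) ! k) ^ ((bl @ [a]) ! k))"
    by (subst sum.reindex[OF inj]) (simp add: case_prod_unfold)
  also have "\<dots> = (\<Sum>is\<in>T. \<Sum>x\<in>A - set is. \<Prod>k<Suc l. f ((is @ [x]) ! k) ^ ((bl @ [a]) ! k))"
    by (rule sum.Sigma[symmetric]) (use finT fin in auto)
  also have "\<dots> = (\<Sum>is\<in>T. \<Sum>x\<in>A - set is. P is * f x ^ a)"
    by (intro sum.cong refl) (auto simp: T_def P_def l_def nth_append intro!: prod.cong)
  also have "\<dots> = (\<Sum>is\<in>T. P is * ((\<Sum>x\<in>A. f x ^ a) - (\<Sum>k<l. f (is ! k) ^ a)))"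
  proof (intro sum.cong refl)
    fix "is" assume "is \<in> T"
    then have "length is = l" "set is \<subseteq> A" "distinct is"
      by (auto simp: T_def)
    moreover from this have "(\<Sum>x\<in>set is. f x ^ a) = (\<Sum>k<l. f (is ! k) ^ a)"
      by (simp add: sum.distinct_set_conv_list sum_list_sum_nth atLeast0LessThan)
    ultimately show "(\<Sum>x\<in>A - set is. P is * f x ^ a) =
        P is * ((\<Sum>x\<in>A. f x ^ a) - (\<Sum>k<l. f (is ! k) ^ a))"
      by (simp add: sum_distrib_left[symmetric] sum_diff[OF fin])
  qed
  also have "\<dots> = (\<Sum>x\<in>A. f x ^ a) * (\<Sum>is\<in>T. P is) - (\<Sum>k<l. \<Sum>is\<in>T. P is * f (is ! k) ^ a)"
    by (simp add: right_diff_distrib sum_subtractf sum_distrib_left sum_distrib_right mult_ac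
        sum.swap[of _ T])
  also have "(\<Sum>is\<in>T. P is) = distinct_power_sum f A bl"
    by (simp add: distinct_power_sum_def T_def P_def l_def)
  also have "(\<Sum>k<l. \<Sum>is\<in>T. P is * f (is ! k) ^ a) =
      (\<Sum>k<l. distinct_power_sum f A (bl[k := bl ! k + a]))"
    by (intro sum.cong refl)
      (simp add: distinct_power_sum_def T_def P_def l_def prod_power_list_update_add)
  finally show ?thesis
    by (simp add: l_def)
qed

fun signed_matchings :: "nat \<Rightarrow> real" where
  "signed_matchings 0 = 1"
| "signed_matchings (Suc 0) = 0"
| "signed_matchings (Suc (Suc k)) = - real (Suc k) * signed_matchings k"

lemma signed_matchings_Suc: "signed_matchings (Suc c) = - real c * signed_matchings (c - 1)"
  by (cases c) auto

lemma signed_matchings_even: "signed_matchings (2*t) = (-1)^t * fact (2*t) / (fact t * 2^t)"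
proof (induction t)
  case (Suc t)
  have fact_step: "real (2*t+1) * (fact (2*t) / (fact t * 2^t)) =
      (fact (2 * Suc t) :: real) / (fact (Suc t) * 2 ^ Suc t)"
  proof -
    have "(fact (2 * Suc t) :: real) = 2 * real (Suc t) * real (2*t+1) * fact (2*t)"
      by (simp add: numeral_2_eq_2 fact_Suc)
    moreover have "(fact (Suc t) :: real) = real (Suc t) * fact t"
      by simp
    ultimately show ?thesis
      by (simp only:) (simp add: field_simps del: of_nat_Suc)
  qed
  have "signed_matchings (2 * Suc t) = - real (2*t+1) * signed_matchings (2*t)"
    by (simp add: numeral_2_eq_2)
  also have "\<dots> = (-1) ^ Suc t * (real (2*t+1) * (fact (2*t) / (fact t * 2^t)))"
    unfolding Suc.IH by (simp add: field_simps)
  finally show ?case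
    by (metis fact_step times_divide_eq_right)
qed simp

definition leading_coeff :: "nat list \<Rightarrow> real" where
  "leading_coeff al =
    (if set al \<subseteq> {1,2} then signed_matchings (count_list al 1) / 2 ^ (sum_list al div 2) else 0)"

lemma leading_coeff_eq_0: "x \<in> set al \<Longrightarrow> 3 \<le> x \<Longrightarrow> leading_coeff al = 0"
  unfolding leading_coeff_def by auto

lemma leading_coeff_snoc_2: "leading_coeff (bl @ [2]) = leading_coeff bl / 2"
  by (simp add: leading_coeff_def)

lemma leading_coeff_update_eq_0:
  assumes "\<forall>x\<in>set bl. 1 \<le> x" "k < length bl" "2 \<le> a"
  shows "leading_coeff (bl[k := bl ! k + a]) = 0"
proof (rule leading_coeff_eq_0)
  show "bl ! k + a \<in> set (bl[k := bl ! k + a])"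
    using assms(2) by (rule set_update_memI)
  show "3 \<le> bl ! k + a"
    using assms nth_mem by fastforce
qed

lemma count_list_update:
  "k < length xs \<Longrightarrow> count_list (xs[k := x]) y + (if xs ! k = y then 1 else 0) =
     count_list xs y + (if x = y then 1 else 0)"
proof (induction xs arbitrary: k)
  case (Cons z zs)
  show ?case
  proof (cases k)
    case (Suc i)
    with Cons.prems Cons.IH[of i] show ?thesis
      by (auto split: if_splits)
  qed simp
qed simp

lemma leading_coeff_update_1:
  assumes "set bl \<subseteq> {1,2}" "k < length bl"
  shows "leading_coeff (bl[k := bl ! k + 1]) =
    (if bl ! k = 1 then signed_matchings (count_list bl 1 - 1) / 2 ^ ((sum_list bl + 1) div 2) else 0)"
proof (cases "bl ! k = 1")
  case True
  have "set (bl[k := 2]) \<subseteq> {1,2}"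
    using assms(1) by (meson insertCI set_update_subsetI)
  moreover have "count_list (bl[k := 2]) 1 = count_list bl 1 - 1"
    using count_list_update[OF assms(2), of 2 1] True by simp
  moreover have "sum_list (bl[k := 2]) = sum_list bl + 1"
    using assms(2) True by (simp add: sum_list_update)
  ultimately show ?thesis
    using True by (simp add: leading_coeff_def numeral_2_eq_2)
next
  case False
  then have "bl ! k = 2"
    using assms nth_mem by fastforce
  then have "leading_coeff (bl[k := bl ! k + 1]) = 0"
    using assms(2) by (intro leading_coeff_eq_0[of 3]) (auto simp: set_update_memI)
  with False show ?thesis
    by simp
qed

lemma leading_coeff_snoc_1:
  assumes "set bl \<subseteq> {1,2}"
  shows "leading_coeff (bl @ [1]) + (\<Sum>k<length bl. leading_coeff (bl[k := bl ! k + 1])) = 0"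
proof -
  define c where "c = count_list bl 1"
  define q where "q = signed_matchings (c - 1) / 2 ^ ((sum_list bl + 1) div 2)"
  have "(\<Sum>k<length bl. leading_coeff (bl[k := bl ! k + 1])) =
      (\<Sum>k<length bl. if bl ! k = 1 then q else 0)"
    using assms by (intro sum.cong refl) (subst leading_coeff_update_1, auto simp: q_def c_def)
  also have "\<dots> = real (card {k. k < length bl \<and> bl ! k = 1}) * q"
    by (simp add: sum.If_cases Int_def lessThan_def conj_commute)
  also have "card {k. k < length bl \<and> bl ! k = 1} = c"
    by (simp add: c_def count_list_eq_length_filter length_filter_conv_card eq_commute)
  finally have "(\<Sum>k<length bl. leading_coeff (bl[k := bl ! k + 1])) = real c * q" .
  moreover have "leading_coeff (bl @ [1]) = signed_matchings (Suc c) / 2 ^ ((sum_list bl + 1) div 2)"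
    using assms by (simp add: leading_coeff_def c_def)
  ultimately show ?thesis
    by (simp add: q_def signed_matchings_Suc add_divide_distrib[symmetric])
qed

lemma leading_coeff_snoc_odd:
  assumes pos: "\<forall>x\<in>set bl. 1 \<le> x" and "odd a"
  shows "leading_coeff (bl @ [a]) + (\<Sum>k<length bl. leading_coeff (bl[k := bl ! k + a])) = 0"
proof (cases "3 \<le> a")
  case True
  then have "leading_coeff (bl @ [a]) = 0"
    by (intro leading_coeff_eq_0[of a]) auto
  moreover have "leading_coeff (bl[k := bl ! k + a]) = 0" if "k < length bl" for k
    using pos that True by (intro leading_coeff_update_eq_0) auto
  ultimately show ?thesis
    by simp
next
  case False
  with \<open>odd a\<close> have "a = 1"
    by presburger
  show ?thesis
  proof (cases "set bl \<subseteq> {1,2}")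
    case True
    then show ?thesis
      unfolding \<open>a = 1\<close> by (rule leading_coeff_snoc_1)
  next
    case False
    then obtain p where p: "p < length bl" "bl ! p \<notin> {1,2}"
      by (metis in_set_conv_nth subsetI)
    with pos have "3 \<le> bl ! p"
      using nth_mem by fastforce
    have "leading_coeff (bl @ [a]) = 0"
      using p \<open>3 \<le> bl ! p\<close> by (intro leading_coeff_eq_0[of "bl ! p"]) auto
    moreover have "leading_coeff (bl[k := bl ! k + a]) = 0" for k
    proof (cases "k = p")
      case True
      then show ?thesis
        using p \<open>3 \<le> bl ! p\<close>
        by (intro leading_coeff_eq_0[of "bl ! p + a"]) (auto simp: set_update_memI)
    next
      case False
      then have "bl ! p \<in> set (bl[k := bl ! k + a])"
        using p by (metis length_list_update nth_list_update_neq nth_mem)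
      then show ?thesis
        using \<open>3 \<le> bl ! p\<close> by (rule leading_coeff_eq_0)
    qed
    ultimately show ?thesis
      by simp
  qed
qed

definition cos_root_sum :: "nat \<Rightarrow> nat list \<Rightarrow> real" where
  "cos_root_sum n al = distinct_power_sum (\<lambda>i. cos (2*pi*real i/real n)) {1..n} al"

lemma cos_root_sum_Nil [simp]: "cos_root_sum n [] = 1"
  by (simp add: cos_root_sum_def)

lemma cos_root_sum_snoc:
  "cos_root_sum n (bl @ [a]) =
    cos_power_sum n a * cos_root_sum n bl - (\<Sum>k<length bl. cos_root_sum n (bl[k := bl ! k + a]))"
  unfolding cos_root_sum_def cos_power_sum_def by (rule distinct_power_sum_snoc) simp

definition has_leading_term :: "nat list \<Rightarrow> bool" where
  "has_leading_term al \<longleftrightarrow>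
    (\<lambda>n. cos_root_sum n al - leading_coeff al * real n ^ (sum_list al div 2))
      \<in> O(\<lambda>n. real n ^ (sum_list al div 2) / real n)"

lemma real_power_bigo_power_div:
  assumes "d < e"
  shows "(\<lambda>n::nat. real n ^ d) \<in> O(\<lambda>n. real n ^ e / real n)"
proof (intro bigoI[of _ 1])
  show "\<forall>\<^sub>F n in at_top. norm (real n ^ d) \<le> 1 * norm (real n ^ e / real n)"
    using eventually_ge_at_top[of 1]
  proof eventually_elim
    case (elim n)
    have "real n ^ d \<le> real n ^ (e - 1)"
      using elim assms by (intro power_increasing) auto
    also have "\<dots> = real n ^ e / real n"
      using elim assms by (simp add: power_diff)
    finally show ?case
      by simp
  qed
qed

lemma has_leading_term_bigo:
  assumes "has_leading_term al"
  shows "(\<lambda>n. cos_root_sum n al) \<in> O(\<lambda>n. real n ^ (sum_list al div 2))"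
proof -
  let ?d = "sum_list al div 2"
  have "(\<lambda>n. real n ^ ?d / real n) \<in> O(\<lambda>n. real n ^ ?d)"
    by (intro bigoI[of _ 1] always_eventually) (simp add: divide_le_eq)
  with assms have "(\<lambda>n. cos_root_sum n al - leading_coeff al * real n ^ ?d) \<in> O(\<lambda>n. real n ^ ?d)"
    unfolding has_leading_term_def by (rule landau_o.big_trans)
  then have "(\<lambda>n. (cos_root_sum n al - leading_coeff al * real n ^ ?d) + leading_coeff al * real n ^ ?d)
      \<in> O(\<lambda>n. real n ^ ?d)"
    by (rule sum_in_bigo) simp
  then show ?thesis
    by simp
qed

lemma has_leading_term_sum_updates:
  assumes "\<forall>k<length bl. has_leading_term (bl[k := bl ! k + a])"
  defines "e \<equiv> (sum_list bl + a) div 2"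
  shows "(\<lambda>n. \<Sum>k<length bl. cos_root_sum n (bl[k := bl ! k + a]) -
      leading_coeff (bl[k := bl ! k + a]) * real n ^ e) \<in> O(\<lambda>n. real n ^ e / real n)"
proof (intro big_sum_in_bigo)
  fix k assume "k \<in> {..<length bl}"
  then show "(\<lambda>n. cos_root_sum n (bl[k := bl ! k + a]) - leading_coeff (bl[k := bl ! k + a]) * real n ^ e)
      \<in> O(\<lambda>n. real n ^ e / real n)"
    using assms by (simp add: has_leading_term_def sum_list_update e_def)
qed

lemma has_leading_term_snoc_odd:
  assumes pos: "\<forall>x\<in>set bl. 1 \<le> x" and "odd a"
    and upd: "\<forall>k<length bl. has_leading_term (bl[k := bl ! k + a])"
  shows "has_leading_term (bl @ [a])"
proof -
  define e where "e = (sum_list bl + a) div 2"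
  let ?blk = "\<lambda>k. bl[k := bl ! k + a]"
  have "eventually (\<lambda>n. cos_root_sum n (bl @ [a]) - leading_coeff (bl @ [a]) * real n ^ e =
      - (\<Sum>k<length bl. cos_root_sum n (?blk k) - leading_coeff (?blk k) * real n ^ e)) at_top"
    using eventually_gt_at_top[of a]
  proof eventually_elim
    case (elim n)
    with \<open>odd a\<close> have "cos_power_sum n a = 0"
      by (rule cos_power_sum_odd)
    moreover have "leading_coeff (bl @ [a]) = - (\<Sum>k<length bl. leading_coeff (?blk k))"
      using leading_coeff_snoc_odd[OF pos \<open>odd a\<close>] by linarith
    ultimately show ?case
      by (simp add: cos_root_sum_snoc sum_subtractf sum_distrib_right)
  qed
  moreover have "(\<lambda>n. - (\<Sum>k<length bl. cos_root_sum n (?blk k) - leading_coeff (?blk k) * real n ^ e))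
      \<in> O(\<lambda>n. real n ^ e / real n)"
    using has_leading_term_sum_updates[OF upd] by (simp add: e_def)
  ultimately show ?thesis
    unfolding has_leading_term_def by (simp add: e_def landau_o.big.in_cong)
qed

lemma has_leading_term_snoc_2:
  assumes pos: "\<forall>x\<in>set bl. 1 \<le> x" and "has_leading_term bl"
    and upd: "\<forall>k<length bl. has_leading_term (bl[k := bl ! k + 2])"
  shows "has_leading_term (bl @ [2])"
proof -
  define d where "d = sum_list bl div 2"
  let ?blk = "\<lambda>k. bl[k := bl ! k + 2]"
  have e: "(sum_list bl + 2) div 2 = Suc d"
    by (simp add: d_def)
  have "eventually (\<lambda>n. cos_root_sum n (bl @ [2]) - leading_coeff (bl @ [2]) * real n ^ Suc d =
      real n / 2 * (cos_root_sum n bl - leading_coeff bl * real n ^ d)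
      - (\<Sum>k<length bl. cos_root_sum n (?blk k) - leading_coeff (?blk k) * real n ^ Suc d)) at_top"
    using eventually_gt_at_top[of 2]
  proof eventually_elim
    case (elim n)
    then have "cos_power_sum n 2 = real n / 2"
      by (rule cos_power_sum_2)
    moreover have "leading_coeff (?blk k) = 0" if "k < length bl" for k
      using pos that by (intro leading_coeff_update_eq_0) auto
    ultimately show ?case
      by (simp add: cos_root_sum_snoc leading_coeff_snoc_2 algebra_simps)
  qed
  moreover have "(\<lambda>n. real n / 2 * (cos_root_sum n bl - leading_coeff bl * real n ^ d)
      - (\<Sum>k<length bl. cos_root_sum n (?blk k) - leading_coeff (?blk k) * real n ^ Suc d))
      \<in> O(\<lambda>n. real n ^ Suc d / real n)"
  proof (rule sum_in_bigo(2))
    have "(\<lambda>n. real n / 2 * (cos_root_sum n bl - leading_coeff bl * real n ^ d))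
        \<in> O(\<lambda>n. real n * (real n ^ d / real n))"
      using \<open>has_leading_term bl\<close> unfolding has_leading_term_def d_def
      by (intro landau_o.big.mult) simp_all
    also have "(\<lambda>n. real n * (real n ^ d / real n)) = (\<lambda>n. real n ^ Suc d / real n)"
      by auto
    finally show "(\<lambda>n. real n / 2 * (cos_root_sum n bl - leading_coeff bl * real n ^ d))
        \<in> O(\<lambda>n. real n ^ Suc d / real n)" .
    show "(\<lambda>n. \<Sum>k<length bl. cos_root_sum n (?blk k) - leading_coeff (?blk k) * real n ^ Suc d)
        \<in> O(\<lambda>n. real n ^ Suc d / real n)"
      using has_leading_term_sum_updates[OF upd] by (simp only: e)
  qed
  moreover have "sum_list (bl @ [2]) div 2 = Suc d"
    by (simp add: d_def)
  ultimately show ?thesis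
    unfolding has_leading_term_def by (simp only:) (rule landau_o.big.in_cong[THEN iffD2])
qed

lemma has_leading_term_snoc_even:
  assumes pos: "\<forall>x\<in>set bl. 1 \<le> x" and "even a" "4 \<le> a" and "has_leading_term bl"
    and upd: "\<forall>k<length bl. has_leading_term (bl[k := bl ! k + a])"
  shows "has_leading_term (bl @ [a])"
proof -
  define d where "d = sum_list bl div 2"
  define e where "e = (sum_list bl + a) div 2"
  let ?blk = "\<lambda>k. bl[k := bl ! k + a]"
  have "leading_coeff (bl @ [a]) = 0"
    using \<open>4 \<le> a\<close> by (intro leading_coeff_eq_0[of a]) auto
  then have "cos_root_sum n (bl @ [a]) - leading_coeff (bl @ [a]) * real n ^ e =
      cos_power_sum n a * cos_root_sum n bl
      - (\<Sum>k<length bl. cos_root_sum n (?blk k) - leading_coeff (?blk k) * real n ^ e)" for n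
    using pos \<open>4 \<le> a\<close> by (simp add: cos_root_sum_snoc leading_coeff_update_eq_0)
  moreover have "(\<lambda>n. cos_power_sum n a * cos_root_sum n bl
      - (\<Sum>k<length bl. cos_root_sum n (?blk k) - leading_coeff (?blk k) * real n ^ e))
      \<in> O(\<lambda>n. real n ^ e / real n)"
  proof (rule sum_in_bigo(2))
    have "(\<lambda>n. cos_power_sum n a * cos_root_sum n bl) \<in> O(\<lambda>n. real n * real n ^ d)"
      using cos_power_sum_bigo has_leading_term_bigo[OF \<open>has_leading_term bl\<close>]
      unfolding d_def by (rule landau_o.big.mult)
    also have "(\<lambda>n. real n * real n ^ d) \<in> O(\<lambda>n. real n ^ e / real n)"
      using \<open>even a\<close> \<open>4 \<le> a\<close> unfolding power_Suc[symmetric] d_def e_def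
      by (intro real_power_bigo_power_div) presburger
    finally show "(\<lambda>n. cos_power_sum n a * cos_root_sum n bl) \<in> O(\<lambda>n. real n ^ e / real n)" .
    show "(\<lambda>n. \<Sum>k<length bl. cos_root_sum n (?blk k) - leading_coeff (?blk k) * real n ^ e)
        \<in> O(\<lambda>n. real n ^ e / real n)"
      using has_leading_term_sum_updates[OF upd] by (simp only: e_def)
  qed
  moreover have "sum_list (bl @ [a]) div 2 = e"
    by (simp add: e_def)
  ultimately show ?thesis
    unfolding has_leading_term_def by simp
qed

theorem has_leading_term:
  "\<forall>x\<in>set al. 1 \<le> x \<Longrightarrow> has_leading_term al"
proof (induction "length al" arbitrary: al rule: less_induct)
  case less
  show ?case
  proof (cases al rule: rev_exhaust)
    case Nil
    then show ?thesis
      by (simp add: has_leading_term_def leading_coeff_def)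
  next
    case (snoc bl a)
    have pos: "\<forall>x\<in>set bl. 1 \<le> x" and "1 \<le> a"
      using less.prems snoc by auto
    have "has_leading_term bl"
      using less.hyps pos snoc by simp
    moreover have "has_leading_term (bl[k := bl ! k + a])" if "k < length bl" for k
    proof (rule less.hyps)
      show "length (bl[k := bl ! k + a]) < length al"
        using snoc by simp
      show "\<forall>x\<in>set (bl[k := bl ! k + a]). 1 \<le> x"
        using pos \<open>1 \<le> a\<close> set_update_subset_insert[of bl k] by fastforce
    qed
    moreover have "odd a \<or> a = 2 \<or> even a \<and> 4 \<le> a"
      using \<open>1 \<le> a\<close> by presburger
    ultimately show ?thesis
      unfolding snoc using pos
      by (metis has_leading_term_snoc_odd has_leading_term_snoc_2 has_leading_term_snoc_even)
  qed
qed

lemma S_eq_cos_root_sum: "S m n al = cos_root_sum n al / real n ^ m"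
  by (simp add: S_def cos_root_sum_def distinct_power_sum_def)

lemma S_minus_leading_coeff_bigo:
  assumes "\<forall>x\<in>set al. 1 \<le> x" "sum_list al = 2*m"
  shows "(\<lambda>n. S m n al - leading_coeff al) \<in> O(\<lambda>n. 1 / real n)"
proof -
  have nonzero: "eventually (\<lambda>n::nat. real n ^ m \<noteq> 0) at_top"
    using eventually_gt_at_top[of 0] by eventually_elim simp
  have "(\<lambda>n. cos_root_sum n al - leading_coeff al * real n ^ m) \<in> O(\<lambda>n. real n ^ m / real n)"
    using has_leading_term[OF assms(1)] assms(2) by (simp add: has_leading_term_def)
  then have "(\<lambda>n. (cos_root_sum n al - leading_coeff al * real n ^ m) / real n ^ m)
      \<in> O(\<lambda>n. real n ^ m / real n / real n ^ m)"
    by (rule landau_o.big.divide_right[OF nonzero])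
  moreover have "eventually (\<lambda>n. S m n al - leading_coeff al =
      (cos_root_sum n al - leading_coeff al * real n ^ m) / real n ^ m) at_top"
    using nonzero by eventually_elim (simp add: S_eq_cos_root_sum diff_divide_distrib)
  ultimately have "(\<lambda>n. S m n al - leading_coeff al) \<in> O(\<lambda>n. real n ^ m / real n / real n ^ m)"
    by (rule landau_o.big.in_cong[THEN iffD2, rotated])
  also have "eventually (\<lambda>n. real n ^ m / real n / real n ^ m = 1 / real n) at_top"
    using nonzero by eventually_elim simp
  then have "O(\<lambda>n. real n ^ m / real n / real n ^ m) = O(\<lambda>n. 1 / real n)"
    by (rule landau_o.big.cong)
  finally show ?thesis .
qed

lemma S_div_leading_coeff_bigo:
  assumes "\<forall>x\<in>set al. 1 \<le> x" "sum_list al = 2*m" "leading_coeff al \<noteq> 0"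
  shows "(\<lambda>n. S m n al / leading_coeff al - 1) \<in> O(\<lambda>n. 1 / real n)"
proof -
  have "(\<lambda>n. (S m n al - leading_coeff al) / leading_coeff al) \<in> O(\<lambda>n. 1 / real n)"
    using S_minus_leading_coeff_bigo[OF assms(1,2)] assms(3) by simp
  moreover have "(S m n al - leading_coeff al) / leading_coeff al = S m n al / leading_coeff al - 1" for n
    using assms(3) by (simp add: field_simps)
  ultimately show ?thesis
    by simp
qed

lemma length_eq_count_12_others:
  "length (xs :: nat list) = length (filter (\<lambda>a. a = 1) xs) + length (filter (\<lambda>a. a = 2) xs)
     + length (filter (\<lambda>a. a \<notin> {1,2}) xs)"
  by (induction xs) auto

lemma sum_list_eq_count_12:
  "set (xs :: nat list) \<subseteq> {1,2} \<Longrightarrow>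
    sum_list xs = length (filter (\<lambda>a. a = 1) xs) + 2 * length (filter (\<lambda>a. a = 2) xs)"
  by (induction xs) auto

lemma tuples_A_iff_subset_12:
  assumes "al \<in> adm_tuples m j" "m \<le> j" "j \<le> 2*m"
  shows "al \<in> tuples_A m j \<longleftrightarrow> set al \<subseteq> {1,2}"
proof
  assume "al \<in> tuples_A m j"
  then have "length al = j" "length (filter (\<lambda>a. a = 1) al) = 2*(j - m)"
    "length (filter (\<lambda>a. a = 2) al) = 2*m - j"
    by (simp_all add: tuples_A_def adm_tuples_def)
  then have "length (filter (\<lambda>a. a \<notin> {1,2}) al) = 0"
    using assms(2,3) length_eq_count_12_others[of al] by linarith
  then show "set al \<subseteq> {1,2}"
    by (auto simp: filter_empty_conv)
next
  assume sub: "set al \<subseteq> {1,2}"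
  then have "length (filter (\<lambda>a. a \<notin> {1,2}) al) = 0"
    by (auto simp: filter_empty_conv)
  moreover have "length al = j" "sum_list al = 2*m"
    using assms(1) by (simp_all add: adm_tuples_def)
  ultimately have "length (filter (\<lambda>a. a = 1) al) = 2*(j - m)"
    "length (filter (\<lambda>a. a = 2) al) = 2*m - j"
    using length_eq_count_12_others[of al] sum_list_eq_count_12[OF sub] by linarith+
  then show "al \<in> tuples_A m j"
    using assms(1) by (simp add: tuples_A_def)
qed

lemma leading_coeff_tuples_A:
  assumes "al \<in> tuples_A m j" "m \<le> j" "j \<le> 2*m"
  shows "leading_coeff al = (-1) ^ (j - m) * fact (2*(j - m)) / (2 ^ j * fact (j - m))"
proof -
  have adm: "al \<in> adm_tuples m j"
    using assms(1) by (simp add: tuples_A_def)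
  have "count_list al 1 = length (filter (\<lambda>a. a = 1) al)"
    by (induction al) auto
  then have "count_list al 1 = 2*(j - m)"
    using assms(1) by (simp add: tuples_A_def)
  moreover have "set al \<subseteq> {1,2}"
    using tuples_A_iff_subset_12[OF adm assms(2,3)] assms(1) by simp
  moreover have "sum_list al = 2*m"
    using adm by (simp add: adm_tuples_def)
  moreover have "(2::real) ^ j = 2 ^ (j - m) * 2 ^ m"
    using assms(2) by (simp flip: power_add)
  ultimately show ?thesis
    by (simp add: leading_coeff_def signed_matchings_even)
qed

theorem lemma3:
  fixes m j :: nat
  assumes "m \<ge> 1" and "m \<le> j" and "j \<le> 2*m"
  shows "(\<forall>al \<in> tuples_A m j.
            (\<lambda>n. S m n al /
               ((-1) ^ (j - m) * fact (2*(j - m)) / (2 ^ j * fact (j - m))) - 1)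
              \<in> O(\<lambda>n. 1 / real n))
       \<and> (\<forall>al \<in> tuples_Ac m j. (\<lambda>n. S m n al) \<in> O(\<lambda>n. 1 / real n))"
proof (intro conjI ballI)
  fix al assume al: "al \<in> tuples_A m j"
  have L: "leading_coeff al = (-1) ^ (j - m) * fact (2*(j - m)) / (2 ^ j * fact (j - m))"
    using al assms(2,3) by (rule leading_coeff_tuples_A)
  show "(\<lambda>n. S m n al / ((-1) ^ (j - m) * fact (2*(j - m)) / (2 ^ j * fact (j - m))) - 1)
      \<in> O(\<lambda>n. 1 / real n)"
    unfolding L[symmetric] using al L
    by (intro S_div_leading_coeff_bigo) (auto simp: tuples_A_def adm_tuples_def)
next
  fix al assume "al \<in> tuples_Ac m j"
  then have "al \<in> adm_tuples m j" "al \<notin> tuples_A m j"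
    by (simp_all add: tuples_Ac_def)
  then have "leading_coeff al = 0"
    using tuples_A_iff_subset_12 assms(2,3) by (simp add: leading_coeff_def)
  moreover have "\<forall>x\<in>set al. 1 \<le> x" "sum_list al = 2*m"
    using \<open>al \<in> adm_tuples m j\<close> by (auto simp: adm_tuples_def)
  ultimately show "(\<lambda>n. S m n al) \<in> O(\<lambda>n. 1 / real n)"
    using S_minus_leading_coeff_bigo[of al m] by simp
qed

end
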